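(* Let $a \geq 1$ and $\alpha > 0$. Consider the scalar system $X_{n+1} = a X_n + Z_n - U_n$, $n = 1, 2, \ldots$, where $X_1, Z_1, Z_2, \ldots$ are independent real random variables with bounded $\alpha$-th moments, i.e. $\mathbb{E}[|X_1|^\alpha] < \infty$ and $\sup_n \mathbb{E}[|Z_n|^\alpha] < \infty$. Then for every $0 < \beta < \alpha$, $$M^\star_\beta \leq \lfloor a \rfloor + 1.$$
   Context: An $M$-bin causal quantizer-controller is a sequence $\{\mathsf f_n, \mathsf g_n\}_{n=1}^\infty$ of (measurable) maps $\mathsf f_n \colon \mathbb{R}^n \to [M] = \{1,\ldots,M\}$ and $\mathsf g_n \colon [M]^n \to \mathbb{R}$; the control at time $n$ is $U_n = \mathsf g_n(\mathsf f_1(X_1), \mathsf f_2(X_1,X_2), \ldots, \mathsf f_n(X_1,\ldots,X_n))$. For $\beta > 0$, $M^\star_\beta$ is the minimum $M$ such that there exists an $M$-bin causal quantizer-controller for which the resulting state process satisfies $\limsup_{n\to\infty} \mathbb{E}[|X_n|^\beta] < \infty$ ($\beta$-moment stability). *)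

theory Defs
  imports "HOL-Probability.Probability"
begin

text \<open>Given the initial state x1, the noise
sequence z (z n = Z_n for n \<ge> 1), the quantizers f (f k maps (X_1,...,X_k),
encoded as a function on {1..k}, to a bin) and the controllers g (g n maps the bin
sequence on {1..n} to a real control), traj n is a function whose values at the
indices 1..n+1 are the states X_1,...,X_{n+1}.\<close>

primrec traj :: "real \<Rightarrow> (nat \<Rightarrow> (nat \<Rightarrow> real) \<Rightarrow> nat) \<Rightarrow> (nat \<Rightarrow> (nat \<Rightarrow> nat) \<Rightarrow> real)
    \<Rightarrow> real \<Rightarrow> (nat \<Rightarrow> real) \<Rightarrow> nat \<Rightarrow> (nat \<Rightarrow> real)" where
  "traj a f g x1 z 0 = (\<lambda>_. x1)"
| "traj a f g x1 z (Suc n) =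
     (let xs = traj a f g x1 z n;
          m = Suc n;
          u = g m (\<lambda>k\<in>{1..m}. f k (\<lambda>j\<in>{1..k}. xs j))
      in xs(Suc m := a * xs m + z m - u))"

definition state :: "real \<Rightarrow> (nat \<Rightarrow> (nat \<Rightarrow> real) \<Rightarrow> nat) \<Rightarrow> (nat \<Rightarrow> (nat \<Rightarrow> nat) \<Rightarrow> real)
    \<Rightarrow> ('w \<Rightarrow> real) \<Rightarrow> (nat \<Rightarrow> 'w \<Rightarrow> real) \<Rightarrow> nat \<Rightarrow> 'w \<Rightarrow> real" where
  "state a f g X1 Z n \<omega> = traj a f g (X1 \<omega>) (\<lambda>k. Z k \<omega>) n n"

text \<open>An Mb-bin causal quantizer-controller: each f n is a measurable map
from R^n (product Borel space indexed by {1..n}) to [Mb] = {1..Mb}; g n is an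
arbitrary map [Mb]^n \<rightarrow> R (only its values on {1..n}-indexed bin sequences matter).\<close>
definition quantizer_controller ::
    "nat \<Rightarrow> (nat \<Rightarrow> (nat \<Rightarrow> real) \<Rightarrow> nat) \<Rightarrow> (nat \<Rightarrow> (nat \<Rightarrow> nat) \<Rightarrow> real) \<Rightarrow> bool" where
  "quantizer_controller Mb f g \<longleftrightarrow>
     (\<forall>n\<ge>1. f n \<in> (\<Pi>\<^sub>M k\<in>{1..n}. (borel :: real measure)) \<rightarrow>\<^sub>M count_space {1..Mb})"

definition moment_stable :: "'w measure \<Rightarrow> real \<Rightarrow> ('w \<Rightarrow> real) \<Rightarrow> (nat \<Rightarrow> 'w \<Rightarrow> real)
    \<Rightarrow> real \<Rightarrow> (nat \<Rightarrow> (nat \<Rightarrow> real) \<Rightarrow> nat) \<Rightarrow> (nat \<Rightarrow> (nat \<Rightarrow> nat) \<Rightarrow> real) \<Rightarrow> bool" where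
  "moment_stable M a X1 Z \<beta> f g \<longleftrightarrow>
     limsup (\<lambda>n. \<integral>\<^sup>+ \<omega>. ennreal (\<bar>state a f g X1 Z n \<omega>\<bar> powr \<beta>) \<partial>M) < \<infinity>"

definition Mstar :: "'w measure \<Rightarrow> real \<Rightarrow> ('w \<Rightarrow> real) \<Rightarrow> (nat \<Rightarrow> 'w \<Rightarrow> real) \<Rightarrow> real \<Rightarrow> nat" where
  "Mstar M a X1 Z \<beta> =
     (LEAST Mb. \<exists>f g. quantizer_controller Mb f g \<and> moment_stable M a X1 Z \<beta> f g)"

end

theory Submission
  imports Defs
begin

text \<open>Since \<open>Mb = \<lfloor>a\<rfloor> + 1 > a\<close>, for a long enough block length \<open>T\<close> the \<open>Mb^T\<close> bin sequences
  of a block can carry the symbol of a uniform quantizer with \<open>N - 1 \<ge> 4 a^T\<close> cells. So the scheme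
  works in blocks of \<open>T\<close> steps: the state at the start of a block is quantized on a range
  \<open>[-L, L]\<close> (with an extra overflow symbol), the symbol is sent digit by digit, and at the end of
  the block \<open>a^T\<close> times its reconstruction is subtracted, so over a block the state evolves as
  \<open>y \<mapsto> a^T (y - q) + w\<close> with \<open>w\<close> the accumulated noise. The range zooms in, \<open>L \<mapsto> max (L/2) 1\<close>,
  when the state was inside and zooms out, \<open>L \<mapsto> K L\<close>, on overflow. For the Lyapunov function
  \<open>V(y, L) = L^\<beta>\<close> inside the range and \<open>2 K^\<beta> L^(\<beta>-\<alpha>) |y|^\<alpha>\<close> outside, one block gives
  \<open>V' \<le> \<rho> V + C (1 + |w|^\<alpha>)\<close> with \<open>\<rho> < 1\<close>, pathwise. Hence \<open>E V\<close> stays bounded, and since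
  \<open>\<beta> < \<alpha>\<close>, within a block \<open>E |X_n|^\<beta>\<close> is bounded by \<open>E V\<close> and the noise moments.\<close>

lemma ge_one_powr_le_one: "1 \<le> (x::real) \<Longrightarrow> e \<le> 0 \<Longrightarrow> x powr e \<le> 1"
  using powr_mono2'[of e 1 x] by simp

lemma powr_add_le:
  fixes x y r :: real
  assumes "0 \<le> x" "0 \<le> y" "0 < r"
  shows "(x + y) powr r \<le> 2 powr r * (x powr r + y powr r)"
proof -
  have "(x + y) powr r \<le> (2 * max x y) powr r"
    using assms by (intro powr_mono2) auto
  also have "\<dots> = 2 powr r * max x y powr r"
    using assms by (simp add: powr_mult)
  also have "max x y powr r \<le> x powr r + y powr r"
    by (simp add: max_def)
  finally show ?thesis by simp
qed

lemma sum_powr_le: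
  fixes x :: "'i \<Rightarrow> real"
  assumes I: "finite I" "I \<noteq> {}" and nonneg: "\<And>i. i \<in> I \<Longrightarrow> 0 \<le> x i" and r: "0 < r"
  shows "(\<Sum>i\<in>I. x i) powr r \<le> real (card I) powr r * (\<Sum>i\<in>I. x i powr r)"
proof -
  have "Max (x ` I) \<in> x ` I" using I by simp
  then obtain i0 where i0: "i0 \<in> I" "x i0 = Max (x ` I)" by auto
  have "(\<Sum>i\<in>I. x i) \<le> (\<Sum>i\<in>I. x i0)"
    using I i0 by (intro sum_mono) auto
  then have "(\<Sum>i\<in>I. x i) powr r \<le> (real (card I) * x i0) powr r"
    using nonneg r by (intro powr_mono2) (auto intro: sum_nonneg)
  also have "\<dots> = real (card I) powr r * x i0 powr r"
    using nonneg i0 by (simp add: powr_mult)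
  also have "x i0 powr r \<le> (\<Sum>i\<in>I. x i powr r)"
    using I i0 by (intro member_le_sum) auto
  finally show ?thesis by (simp add: mult_left_mono)
qed

lemma powr_le_one_add_powr:
  fixes x b c :: real
  assumes "0 \<le> x" "0 < b" "b < c"
  shows "x powr b \<le> 1 + x powr c"
proof (cases "x \<le> 1")
  case True
  then have "x powr b \<le> 1" using assms by (intro powr_le1) auto
  then show ?thesis using powr_ge_zero[of x c] by linarith
next
  case False
  then have "x powr b \<le> x powr c" using assms by (intro powr_mono) auto
  then show ?thesis by simp
qed

lemma sum_digits_eq_mod: "(\<Sum>i<n. (s div b ^ i mod b) * b ^ i) = (s::nat) mod b ^ n"
proof (induction n)
  case (Suc n)
  have "s mod b ^ Suc n = b ^ n * (s div b ^ n mod b) + s mod b ^ n"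
    using mod_mult2_eq[of s "b ^ n" b] by (simp add: mult.commute)
  then show ?case using Suc by (simp add: mult.commute)
qed simp

lemma unrolled_affine_step:
  fixes a x :: real
  shows "a * (a ^ i * x + (\<Sum>l<i. a ^ (i - 1 - l) * w l)) + w i
    = a ^ Suc i * x + (\<Sum>l<Suc i. a ^ (Suc i - 1 - l) * w l)"
proof -
  have "a * (\<Sum>l<i. a ^ (i - 1 - l) * w l) = (\<Sum>l<i. a ^ (Suc i - 1 - l) * w l)"
    unfolding sum_distrib_left
    by (intro sum.cong refl) (auto simp: Suc_diff_Suc simp flip: power_Suc)
  then show ?thesis by (simp add: algebra_simps)
qed

lemma ennreal_affine_recursion_bounded:
  fixes e :: "nat \<Rightarrow> ennreal" and \<rho> D :: real
  assumes step: "\<And>j. e (Suc j) \<le> ennreal \<rho> * e j + ennreal D"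
    and \<rho>: "0 \<le> \<rho>" "\<rho> < 1" and D: "0 \<le> D" and e0: "e 0 < \<infinity>"
  shows "\<exists>B. \<forall>j. e j \<le> ennreal B"
proof -
  define B where "B = max (enn2real (e 0)) (D / (1 - \<rho>))"
  have "D / (1 - \<rho>) \<le> B" unfolding B_def by simp
  then have fixpoint: "\<rho> * B + D \<le> B"
    using \<rho> by (simp add: pos_divide_le_eq algebra_simps)
  have "0 \<le> B" unfolding B_def by (simp add: le_max_iff_disj)
  have "e j \<le> ennreal B" for j
  proof (induction j)
    case 0
    show ?case using e0 unfolding B_def by (cases "e 0") (auto simp: ennreal_leI)
  next
    case (Suc j)
    have "e (Suc j) \<le> ennreal \<rho> * ennreal B + ennreal D"
      using Suc by (intro order_trans[OF step] add_mono mult_left_mono) auto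
    also have "\<dots> = ennreal (\<rho> * B + D)"
      using \<rho> D \<open>0 \<le> B\<close> by (simp add: ennreal_plus ennreal_mult)
    also have "\<dots> \<le> ennreal B" using fixpoint by (rule ennreal_leI)
    finally show ?case .
  qed
  then show ?thesis by blast
qed

lemma (in prob_space) nn_integral_affine:
  fixes f g :: "'a \<Rightarrow> real"
  assumes "f \<in> borel_measurable M" "g \<in> borel_measurable M" "\<And>x. 0 \<le> f x" "\<And>x. 0 \<le> g x"
    and "0 \<le> p" "0 \<le> q" "0 \<le> r"
  shows "(\<integral>\<^sup>+ x. ennreal (q + p * f x + r * g x) \<partial>M)
    = ennreal q + ennreal p * (\<integral>\<^sup>+ x. f x \<partial>M) + ennreal r * (\<integral>\<^sup>+ x. g x \<partial>M)"
proof -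
  have "(\<integral>\<^sup>+ x. ennreal (q + p * f x + r * g x) \<partial>M)
      = (\<integral>\<^sup>+ x. ennreal q + ennreal p * ennreal (f x) + ennreal r * ennreal (g x) \<partial>M)"
    using assms by (intro nn_integral_cong) (simp add: ennreal_plus ennreal_mult)
  also have "\<dots> = (\<integral>\<^sup>+ x. ennreal q \<partial>M) + (\<integral>\<^sup>+ x. ennreal p * ennreal (f x) \<partial>M)
      + (\<integral>\<^sup>+ x. ennreal r * ennreal (g x) \<partial>M)"
    using assms by (simp add: nn_integral_add)
  also have "\<dots> = ennreal q + ennreal p * (\<integral>\<^sup>+ x. f x \<partial>M) + ennreal r * (\<integral>\<^sup>+ x. g x \<partial>M)"
    using assms by (simp add: nn_integral_cmult emeasure_space_1)
  finally show ?thesis .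
qed

lemma (in prob_space) indep_vars_measurable:
  "indep_vars M' X I \<Longrightarrow> i \<in> I \<Longrightarrow> X i \<in> M \<rightarrow>\<^sub>M M' i"
  unfolding indep_vars_def2 by blast

lemma SUP_less_top_bounded:
  fixes f :: "'i \<Rightarrow> ennreal"
  assumes "(SUP i\<in>I. f i) < \<infinity>"
  shows "\<exists>S\<ge>0. \<forall>i\<in>I. f i \<le> ennreal S"
proof (intro exI conjI ballI)
  show "f i \<le> ennreal (enn2real (SUP i\<in>I. f i))" if "i \<in> I" for i
    using assms that by (simp add: SUP_upper)
qed simp

lemma traj_Suc_le: "k \<le> Suc n \<Longrightarrow> traj a f g x1 z (Suc n) k = traj a f g x1 z n k"
  by (simp add: Let_def)

declare traj.simps(2) [simp del]

lemma traj_eq_diag: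
  assumes "k \<le> Suc n"
  shows "traj a f g x1 z n k = traj a f g x1 z k k"
proof (cases "k \<le> n")
  case True
  then show ?thesis
    by (induction n rule: dec_induct) (simp_all add: traj_Suc_le)
next
  case False
  with assms have "k = Suc n" by simp
  then show ?thesis by (simp add: traj_Suc_le)
qed

lemma traj_diag_Suc:
  assumes "1 \<le> m"
  shows "traj a f g x1 z (Suc m) (Suc m) = a * traj a f g x1 z m m + z m
    - g m (\<lambda>k\<in>{1..m}. f k (\<lambda>j\<in>{1..k}. traj a f g x1 z j j))"
proof -
  obtain n where m: "m = Suc n" using assms by (cases m) auto
  have diag: "traj a f g x1 z n j = traj a f g x1 z j j" if "j \<le> m" for j
    using that m by (intro traj_eq_diag) simp
  have "(\<lambda>k\<in>{1..m}. f k (\<lambda>j\<in>{1..k}. traj a f g x1 z n j))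
      = (\<lambda>k\<in>{1..m}. f k (\<lambda>j\<in>{1..k}. traj a f g x1 z j j))"
    using diag by (intro restrict_ext) (auto intro!: arg_cong[where f = "f _"] restrict_ext)
  moreover have "traj a f g x1 z (Suc m) (Suc m) = traj a f g x1 z m (Suc m)"
    by (simp add: traj_Suc_le)
  ultimately show ?thesis
    using diag[of m] by (simp add: m traj.simps(2) Let_def)
qed

locale zooming_quantizer =
  fixes A K \<alpha> \<beta> :: real and N :: nat
  assumes A_ge_1: "1 \<le> A" and resolution: "4 * A \<le> real N - 1"
    and K_ge_1: "1 \<le> K" and beta_pos: "0 < \<beta>" and beta_less_alpha: "\<beta> < \<alpha>"
    and zoom_out_factor: "2 powr \<alpha> * A powr \<alpha> * K powr (\<beta> - \<alpha>) \<le> 1 / 2"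
begin

text \<open>Symbols \<open>0, \<dots>, N - 2\<close> index the \<open>N - 1\<close> equal cells of \<open>[-L, L]\<close>, whose
  midpoints are the reconstruction values; \<open>N - 1\<close> signals overflow and is reconstructed as 0.\<close>

definition quant_index :: "real \<Rightarrow> real \<Rightarrow> nat" where
  "quant_index y L =
    (if L < \<bar>y\<bar> then N - 1 else min (N - 2) (nat \<lfloor>(real N - 1) * (y + L) / (2 * L)\<rfloor>))"

definition quant_value :: "nat \<Rightarrow> real \<Rightarrow> real" where
  "quant_value s L = (if s = N - 1 then 0 else - L + (2 * real s + 1) * L / (real N - 1))"

definition zoom :: "real \<Rightarrow> nat \<Rightarrow> real" where
  "zoom L s = (if s = N - 1 then K * L else max (L / 2) 1)"

definition lyap :: "real \<Rightarrow> real \<Rightarrow> real" where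
  "lyap y L = (if \<bar>y\<bar> \<le> L then L powr \<beta> else 2 * K powr \<beta> * L powr (\<beta> - \<alpha>) * \<bar>y\<bar> powr \<alpha>)"

definition rate :: real where
  "rate = max ((1 / 2) powr \<beta>) (1 / 2)"

definition gain :: real where
  "gain = 2 * 2 powr \<alpha> * K powr \<beta>"

lemma N_ge_2: "2 \<le> N"
  using resolution A_ge_1 by linarith

lemma alpha_pos: "0 < \<alpha>"
  using beta_pos beta_less_alpha by simp

lemma rate_less_1: "rate < 1"
  unfolding rate_def using beta_pos by (simp add: powr01_less_one)

lemma rate_nonneg: "0 \<le> rate"
  unfolding rate_def by simp

lemma K_powr_beta_ge_1: "1 \<le> K powr \<beta>"
  using K_ge_1 beta_pos by (simp add: ge_one_powr_ge_zero)

lemma gain_ge_1: "1 \<le> gain"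
proof -
  have "1 \<le> 2 powr \<alpha>" using alpha_pos by (simp add: ge_one_powr_ge_zero)
  then have "1 * 1 \<le> 2 powr \<alpha> * K powr \<beta>"
    using K_powr_beta_ge_1 by (intro mult_mono) auto
  then show ?thesis unfolding gain_def by simp
qed

lemma one_le_gain_noise: "1 \<le> gain * (1 + \<bar>w\<bar> powr \<alpha>)"
  using gain_ge_1 mult_mono[OF gain_ge_1, of 1 "1 + \<bar>w\<bar> powr \<alpha>"] by simp

lemma quant_index_less: "quant_index y L < N"
  using N_ge_2 unfolding quant_index_def by auto

lemma quant_index_eq_overflow_iff: "quant_index y L = N - 1 \<longleftrightarrow> L < \<bar>y\<bar>"
  using N_ge_2 unfolding quant_index_def by auto

lemma zoom_quant_index: "zoom L (quant_index y L) = (if L < \<bar>y\<bar> then K * L else max (L / 2) 1)"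
  using quant_index_eq_overflow_iff by (simp add: zoom_def)

lemma zoom_ge_1: "1 \<le> L \<Longrightarrow> 1 \<le> zoom L s"
  using K_ge_1 mult_mono[of 1 K 1 L] unfolding zoom_def by auto

lemma quant_error_le:
  assumes "0 < L" "\<bar>y\<bar> \<le> L"
  shows "\<bar>y - quant_value (quant_index y L) L\<bar> \<le> L / (real N - 1)"
proof -
  define c where "c = real N - 1"
  have c: "1 \<le> c" using N_ge_2 unfolding c_def by simp
  have "0 \<le> (y + L) / (2 * L)" "(y + L) / (2 * L) \<le> 1"
    using assms by (auto simp: field_simps)
  define u where "u = c * ((y + L) / (2 * L))"
  have u: "0 \<le> u" "u \<le> c"
    using mult_nonneg_nonneg[OF _ \<open>0 \<le> (y + L) / (2 * L)\<close>, of c]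
      mult_left_mono[OF \<open>(y + L) / (2 * L) \<le> 1\<close>, of c] c
    unfolding u_def by simp_all
  define k where "k = min (N - 2) (nat \<lfloor>u\<rfloor>)"
  have index: "quant_index y L = k" using assms unfolding quant_index_def k_def u_def c_def by auto
  have midpoint: "quant_value k L = - L + (2 * real k + 1) * L / c"
    using N_ge_2 unfolding quant_value_def c_def k_def by auto
  have rounding: "\<bar>u - real k - 1/2\<bar> \<le> 1/2"
  proof (cases "nat \<lfloor>u\<rfloor> \<le> N - 2")
    case True
    then have "real k = of_int \<lfloor>u\<rfloor>" using u unfolding k_def by simp
    then show ?thesis by linarith
  next
    case False
    then have "real k = real N - 2" "real N - 2 < u" using u N_ge_2 unfolding k_def by linarith+
    then show ?thesis using u unfolding c_def by linarith
  qed
  have "y - quant_value k L = 2 * L / c * (u - real k - 1/2)"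
    unfolding midpoint u_def using assms c by (simp add: field_simps)
  then have "\<bar>y - quant_value k L\<bar> = 2 * L / c * \<bar>u - real k - 1/2\<bar>"
    using assms c by (simp add: abs_mult)
  also have "\<dots> \<le> 2 * L / c * (1/2)"
    using rounding assms c by (intro mult_left_mono) auto
  also have "\<dots> = L / c" by simp
  finally show ?thesis using index unfolding c_def by simp
qed

lemma lyap_nonneg: "0 \<le> lyap y L"
  unfolding lyap_def by simp

lemma powr_le_lyap:
  assumes L: "1 \<le> L"
  shows "\<bar>y\<bar> powr \<beta> \<le> lyap y L"
proof (cases "\<bar>y\<bar> \<le> L")
  case True
  then show ?thesis unfolding lyap_def using beta_pos by (auto intro: powr_mono2)
next
  case False
  have "\<bar>y\<bar> powr \<beta> = L powr (\<beta> - \<alpha>) * \<bar>y\<bar> powr \<alpha> * (L / \<bar>y\<bar>) powr (\<alpha> - \<beta>)"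
    using L False by (simp add: powr_divide powr_diff field_simps flip: powr_add)
  also have "\<dots> \<le> L powr (\<beta> - \<alpha>) * \<bar>y\<bar> powr \<alpha>"
    using L False beta_less_alpha by (intro mult_left_le powr_le1) auto
  also have "\<dots> \<le> 2 * K powr \<beta> * (L powr (\<beta> - \<alpha>) * \<bar>y\<bar> powr \<alpha>)"
    using mult_right_mono[of 1 "2 * K powr \<beta>" "L powr (\<beta> - \<alpha>) * \<bar>y\<bar> powr \<alpha>"] K_powr_beta_ge_1
    by simp
  finally show ?thesis using False unfolding lyap_def by (simp add: mult.assoc)
qed

lemma lyap_step_in_range:
  assumes L: "1 \<le> L" and y: "\<bar>y\<bar> \<le> L"
  shows "lyap (A * (y - quant_value (quant_index y L) L) + w) (zoom L (quant_index y L))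
    \<le> rate * lyap y L + gain * (1 + \<bar>w\<bar> powr \<alpha>)"
proof -
  define y' where "y' = A * (y - quant_value (quant_index y L) L) + w"
  define L' where "L' = max (L / 2) 1"
  have zoom: "zoom L (quant_index y L) = L'" using y unfolding zoom_quant_index L'_def by simp
  have "\<bar>A * (y - quant_value (quant_index y L) L)\<bar> \<le> A * (L / (real N - 1))"
    using mult_left_mono[OF quant_error_le] L y A_ge_1 by (simp add: abs_mult)
  also have "\<dots> \<le> L / 4"
    using mult_left_mono[OF resolution, of L] L N_ge_2 by (simp add: field_simps)
  finally have y': "\<bar>y'\<bar> \<le> L / 4 + \<bar>w\<bar>" unfolding y'_def by linarith
  have "lyap y' L' \<le> rate * L powr \<beta> + gain * (1 + \<bar>w\<bar> powr \<alpha>)"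
  proof (cases "\<bar>y'\<bar> \<le> L'")
    case True
    have "lyap y' L' = L' powr \<beta>" using True unfolding lyap_def by simp
    also have "\<dots> \<le> (L / 2) powr \<beta> + 1"
      unfolding L'_def max_def by auto
    also have "(L / 2) powr \<beta> = (1 / 2) powr \<beta> * L powr \<beta>"
      using L by (simp add: powr_divide)
    also have "\<dots> \<le> rate * L powr \<beta>"
      unfolding rate_def by (intro mult_right_mono) auto
    also note one_le_gain_noise
    finally show ?thesis by simp
  next
    case False
    then have "\<bar>y'\<bar> \<le> 2 * \<bar>w\<bar>" using y' L unfolding L'_def by linarith
    have "lyap y' L' = 2 * K powr \<beta> * L' powr (\<beta> - \<alpha>) * \<bar>y'\<bar> powr \<alpha>"
      using False unfolding lyap_def by simp
    also have "\<dots> \<le> 2 * K powr \<beta> * 1 * (2 * \<bar>w\<bar>) powr \<alpha>"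
      using \<open>\<bar>y'\<bar> \<le> 2 * \<bar>w\<bar>\<close> beta_less_alpha alpha_pos unfolding L'_def
      by (intro mult_mono mult_left_mono powr_mono2 ge_one_powr_le_one) auto
    also have "\<dots> = gain * \<bar>w\<bar> powr \<alpha>"
      unfolding gain_def by (simp add: powr_mult)
    also have "\<dots> \<le> rate * L powr \<beta> + gain * (1 + \<bar>w\<bar> powr \<alpha>)"
      using gain_ge_1 rate_nonneg by (simp add: distrib_left)
    finally show ?thesis .
  qed
  then show ?thesis using y unfolding y'_def zoom lyap_def by simp
qed

lemma lyap_zoom_out_le:
  assumes L: "1 \<le> L" and y: "L < \<bar>y\<bar>"
  shows "lyap (A * y + w) (K * L) \<le> lyap y L / 2 + gain * \<bar>w\<bar> powr \<alpha>"
proof -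
  define y' where "y' = A * y + w"
  define E where "E = L powr (\<beta> - \<alpha>) * \<bar>y\<bar> powr \<alpha>"
  have lyap_y: "lyap y L = 2 * K powr \<beta> * E" using y unfolding lyap_def E_def by simp
  show ?thesis
  proof (cases "\<bar>y'\<bar> \<le> K * L")
    case True
    have "L powr \<beta> = L powr (\<beta> - \<alpha>) * L powr \<alpha>"
      using L by (simp flip: powr_add)
    also have "\<dots> \<le> E"
      unfolding E_def using y L alpha_pos by (intro mult_left_mono powr_mono2) auto
    finally have "K powr \<beta> * L powr \<beta> \<le> K powr \<beta> * E" by (intro mult_left_mono) auto
    moreover have "lyap y' (K * L) = K powr \<beta> * L powr \<beta>"
      using True K_ge_1 L unfolding lyap_def by (simp add: powr_mult)
    moreover have "0 \<le> gain * \<bar>w\<bar> powr \<alpha>" using gain_ge_1 by simp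
    ultimately show ?thesis unfolding lyap_y y'_def by simp
  next
    case False
    have "\<bar>y'\<bar> \<le> A * \<bar>y\<bar> + \<bar>w\<bar>"
      unfolding y'_def using abs_triangle_ineq[of "A * y" w] A_ge_1 by (simp add: abs_mult)
    then have "\<bar>y'\<bar> powr \<alpha> \<le> (A * \<bar>y\<bar> + \<bar>w\<bar>) powr \<alpha>"
      using alpha_pos by (intro powr_mono2) auto
    also have "\<dots> \<le> 2 powr \<alpha> * ((A * \<bar>y\<bar>) powr \<alpha> + \<bar>w\<bar> powr \<alpha>)"
      using A_ge_1 alpha_pos by (intro powr_add_le) auto
    finally have y'_powr: "\<bar>y'\<bar> powr \<alpha> \<le> 2 powr \<alpha> * ((A * \<bar>y\<bar>) powr \<alpha> + \<bar>w\<bar> powr \<alpha>)" .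
    have KL: "1 \<le> K * L" using K_ge_1 L mult_mono[of 1 K 1 L] by simp
    have "lyap y' (K * L) = 2 * K powr \<beta> * (K * L) powr (\<beta> - \<alpha>) * \<bar>y'\<bar> powr \<alpha>"
      using False unfolding lyap_def by simp
    also have "\<dots> \<le> 2 * K powr \<beta> * (K * L) powr (\<beta> - \<alpha>) * (2 powr \<alpha> * ((A * \<bar>y\<bar>) powr \<alpha> + \<bar>w\<bar> powr \<alpha>))"
      using y'_powr by (intro mult_left_mono) auto
    also have "\<dots> = (2 powr \<alpha> * A powr \<alpha> * K powr (\<beta> - \<alpha>)) * (2 * K powr \<beta> * E)
        + 2 * K powr \<beta> * 2 powr \<alpha> * ((K * L) powr (\<beta> - \<alpha>) * \<bar>w\<bar> powr \<alpha>)"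
      unfolding E_def using K_ge_1 L A_ge_1 by (simp add: powr_mult algebra_simps)
    also have "\<dots> \<le> 1 / 2 * (2 * K powr \<beta> * E) + 2 * K powr \<beta> * 2 powr \<alpha> * (1 * \<bar>w\<bar> powr \<alpha>)"
      using zoom_out_factor KL beta_less_alpha unfolding E_def
      by (intro add_mono mult_left_mono mult_right_mono ge_one_powr_le_one) auto
    finally show ?thesis unfolding lyap_y gain_def y'_def by (simp add: mult_ac)
  qed
qed

lemma lyap_step_overflow:
  assumes L: "1 \<le> L" and y: "L < \<bar>y\<bar>"
  shows "lyap (A * (y - quant_value (quant_index y L) L) + w) (zoom L (quant_index y L))
    \<le> rate * lyap y L + gain * (1 + \<bar>w\<bar> powr \<alpha>)"
proof -
  have "quant_value (quant_index y L) L = 0"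
    using y quant_index_eq_overflow_iff unfolding quant_value_def by simp
  moreover have "lyap y L / 2 + gain * \<bar>w\<bar> powr \<alpha> \<le> rate * lyap y L + gain * (1 + \<bar>w\<bar> powr \<alpha>)"
    using mult_right_mono[of "1/2" rate "lyap y L"] lyap_nonneg gain_ge_1
    unfolding rate_def by (simp add: distrib_left)
  ultimately show ?thesis
    using lyap_zoom_out_le[OF assms, of w] y by (simp add: zoom_quant_index)
qed

lemma lyap_step:
  assumes "1 \<le> L"
  shows "lyap (A * (y - quant_value (quant_index y L) L) + w) (zoom L (quant_index y L))
    \<le> rate * lyap y L + gain * (1 + \<bar>w\<bar> powr \<alpha>)"
  using assms lyap_step_in_range lyap_step_overflow by (cases "\<bar>y\<bar> \<le> L") auto

lemma quant_index_measurable [measurable]: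
  assumes [measurable]: "f \<in> borel_measurable M" "g \<in> borel_measurable M"
  shows "(\<lambda>x. quant_index (f x) (g x)) \<in> M \<rightarrow>\<^sub>M count_space UNIV"
  unfolding quant_index_def by measurable

end

locale block_scheme = zooming_quantizer "a ^ T" K \<alpha> \<beta> "Mb ^ T"
  for a K \<alpha> \<beta> :: real and Mb T :: nat +
  assumes a_ge_1: "1 \<le> a" and T_pos: "1 \<le> T"
begin

text \<open>Block \<open>j\<close> consists of the times \<open>jT + 1, \<dots>, jT + T\<close>. The quantizer symbol of the state
  at the start of the block is sent as its \<open>T\<close> base-\<open>Mb\<close> digits (shifted to the bins
  \<open>{1..Mb}\<close>), and at the last time of the block the controller subtracts \<open>a^T\<close> times the
  reconstructed state. Encoder and decoder run the same recursion for the zoom levels.\<close>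

primrec zoom_levels :: "(nat \<Rightarrow> real) \<Rightarrow> nat \<Rightarrow> real" where
  "zoom_levels x 0 = 1"
| "zoom_levels x (Suc j) =
    zoom (zoom_levels x j) (quant_index (x (j * T + 1)) (zoom_levels x j))"

definition block_index :: "(nat \<Rightarrow> real) \<Rightarrow> nat \<Rightarrow> nat" where
  "block_index x j = quant_index (x (j * T + 1)) (zoom_levels x j)"

definition encoder :: "nat \<Rightarrow> (nat \<Rightarrow> real) \<Rightarrow> nat" where
  "encoder k x = block_index x ((k - 1) div T) div Mb ^ ((k - 1) mod T) mod Mb + 1"

definition decoded_index :: "(nat \<Rightarrow> nat) \<Rightarrow> nat \<Rightarrow> nat" where
  "decoded_index b j = (\<Sum>i<T. (b (j * T + 1 + i) - 1) * Mb ^ i)"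

primrec decoded_zoom :: "(nat \<Rightarrow> nat) \<Rightarrow> nat \<Rightarrow> real" where
  "decoded_zoom b 0 = 1"
| "decoded_zoom b (Suc j) = zoom (decoded_zoom b j) (decoded_index b j)"

definition controller :: "nat \<Rightarrow> (nat \<Rightarrow> nat) \<Rightarrow> real" where
  "controller m b = (if (m - 1) mod T = T - 1
    then a ^ T * quant_value (decoded_index b ((m - 1) div T)) (decoded_zoom b ((m - 1) div T))
    else 0)"

definition control :: "(nat \<Rightarrow> real) \<Rightarrow> nat \<Rightarrow> real" where
  "control x m = (if (m - 1) mod T = T - 1
    then a ^ T * quant_value (block_index x ((m - 1) div T)) (zoom_levels x ((m - 1) div T))
    else 0)"

definition closed_loop :: "real \<Rightarrow> (nat \<Rightarrow> real) \<Rightarrow> nat \<Rightarrow> real" where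
  "closed_loop x1 z n = traj a encoder controller x1 z n n"

lemma zoom_levels_ge_1: "1 \<le> zoom_levels x j"
  by (induction j) (simp_all add: zoom_ge_1)

lemma zoom_levels_cong:
  "(\<And>l. l < j \<Longrightarrow> x (l * T + 1) = x' (l * T + 1)) \<Longrightarrow> zoom_levels x j = zoom_levels x' j"
  by (induction j) auto

lemma block_start_le:
  assumes "1 \<le> k" "l \<le> (k - 1) div T"
  shows "l * T + 1 \<le> k"
proof -
  have "l * T \<le> (k - 1) div T * T" using assms(2) by simp
  also have "\<dots> \<le> k - 1" by simp
  finally show ?thesis using assms(1) by linarith
qed

lemma encoder_restrict:
  assumes "1 \<le> k"
  shows "encoder k (\<lambda>j\<in>{1..k}. x j) = encoder k x"
proof -
  have "zoom_levels (\<lambda>j\<in>{1..k}. x j) ((k - 1) div T) = zoom_levels x ((k - 1) div T)"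
    using block_start_le[OF assms] by (intro zoom_levels_cong) auto
  then show ?thesis
    using block_start_le[OF assms order_refl] by (simp add: encoder_def block_index_def)
qed

lemma encoder_range: "encoder k x \<in> {1..Mb}"
proof -
  have "0 < Mb" using N_ge_2 T_pos by (cases Mb) (auto simp: power_0_left)
  then show ?thesis unfolding encoder_def by (simp add: Suc_le_eq)
qed

lemma decoded_index_encoder: "decoded_index (\<lambda>k. encoder k x) j = block_index x j"
proof -
  have "decoded_index (\<lambda>k. encoder k x) j = (\<Sum>i<T. (block_index x j div Mb ^ i mod Mb) * Mb ^ i)"
    unfolding decoded_index_def encoder_def by (intro sum.cong) auto
  also have "\<dots> = block_index x j"
    using sum_digits_eq_mod quant_index_less unfolding block_index_def by simp
  finally show ?thesis .
qed

lemma decoded_zoom_encoder: "decoded_zoom (\<lambda>k. encoder k x) j = zoom_levels x j"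
  by (induction j) (simp_all add: decoded_index_encoder block_index_def)

lemma decoded_zoom_cong:
  "(\<And>k. 1 \<le> k \<Longrightarrow> k \<le> j * T \<Longrightarrow> b k = b' k) \<Longrightarrow> decoded_zoom b j = decoded_zoom b' j"
proof (induction j)
  case (Suc j)
  have "decoded_index b j = decoded_index b' j"
    unfolding decoded_index_def using Suc.prems by (intro sum.cong) auto
  moreover have "decoded_zoom b j = decoded_zoom b' j"
    using Suc by (intro Suc.IH) auto
  ultimately show ?case by simp
qed simp

lemma controller_encoder:
  assumes m: "1 \<le> m"
  shows "controller m (\<lambda>k\<in>{1..m}. encoder k x) = control x m"
proof (cases "(m - 1) mod T = T - 1")
  case True
  define j where "j = (m - 1) div T"
  have "m - 1 = j * T + (T - 1)" using True unfolding j_def by (metis div_mult_mod_eq)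
  then have m_eq: "m = j * T + T" using m T_pos by linarith
  have "decoded_index (\<lambda>k\<in>{1..m}. encoder k x) j = decoded_index (\<lambda>k. encoder k x) j"
    unfolding decoded_index_def using m_eq by (intro sum.cong) auto
  moreover have "decoded_zoom (\<lambda>k\<in>{1..m}. encoder k x) j = decoded_zoom (\<lambda>k. encoder k x) j"
    using m_eq by (intro decoded_zoom_cong) auto
  ultimately show ?thesis
    using True unfolding controller_def control_def j_def[symmetric]
    by (simp add: decoded_index_encoder decoded_zoom_encoder)
qed (simp add: controller_def control_def)

lemma closed_loop_1: "closed_loop x1 z 1 = x1"
  using traj_eq_diag[of 1 0 a encoder controller x1 z] by (simp add: closed_loop_def)

lemma closed_loop_Suc:
  assumes "1 \<le> m"
  shows "closed_loop x1 z (Suc m) = a * closed_loop x1 z m + z m - control (closed_loop x1 z) m"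
proof -
  have "(\<lambda>k\<in>{1..m}. encoder k (\<lambda>j\<in>{1..k}. closed_loop x1 z j))
      = (\<lambda>k\<in>{1..m}. encoder k (closed_loop x1 z))"
    by (intro restrict_ext encoder_restrict) auto
  then show ?thesis
    using traj_diag_Suc[OF assms, of a encoder controller x1 z] controller_encoder[OF assms]
    by (simp add: closed_loop_def [abs_def])
qed

definition block_noise :: "(nat \<Rightarrow> real) \<Rightarrow> nat \<Rightarrow> real" where
  "block_noise z j = (\<Sum>l<T. a ^ (T - 1 - l) * z (j * T + 1 + l))"

definition block_moment :: "(nat \<Rightarrow> real) \<Rightarrow> nat \<Rightarrow> real" where
  "block_moment z j = (\<Sum>l<T. \<bar>z (j * T + 1 + l)\<bar> powr \<alpha>)"

primrec lyap_bound :: "real \<Rightarrow> (nat \<Rightarrow> real) \<Rightarrow> nat \<Rightarrow> real" where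
  "lyap_bound x1 z 0 = 1 + 2 * K powr \<beta> * \<bar>x1\<bar> powr \<alpha>"
| "lyap_bound x1 z (Suc j) =
    rate * lyap_bound x1 z j + gain * (1 + (a ^ T * real T) powr \<alpha> * block_moment z j)"

lemma closed_loop_within_block:
  assumes "i < T"
  shows "closed_loop x1 z (j * T + 1 + i)
    = a ^ i * closed_loop x1 z (j * T + 1) + (\<Sum>l<i. a ^ (i - 1 - l) * z (j * T + 1 + l))"
  using assms
proof (induction i)
  case (Suc i)
  then have "(j * T + 1 + i - 1) mod T = i" "i \<noteq> T - 1" by auto
  then have "control (closed_loop x1 z) (j * T + 1 + i) = 0" unfolding control_def by simp
  then have "closed_loop x1 z (j * T + 1 + Suc i)
      = a * closed_loop x1 z (j * T + 1 + i) + z (j * T + 1 + i)"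
    using closed_loop_Suc[of "j * T + 1 + i" x1 z] by simp
  also have "\<dots> = a ^ Suc i * closed_loop x1 z (j * T + 1)
      + (\<Sum>l<Suc i. a ^ (Suc i - 1 - l) * z (j * T + 1 + l))"
    unfolding Suc.IH[OF Suc_lessD[OF Suc.prems]] by (rule unrolled_affine_step)
  finally show ?case .
qed simp

lemma closed_loop_next_block:
  "closed_loop x1 z (Suc j * T + 1) = a ^ T * (closed_loop x1 z (j * T + 1)
    - quant_value (block_index (closed_loop x1 z) j) (zoom_levels (closed_loop x1 z) j))
    + block_noise z j"
proof -
  let ?X = "closed_loop x1 z"
  define i where "i = T - 1"
  have i: "i < T" "Suc i = T" using T_pos unfolding i_def by auto
  then have "(j * T + 1 + i - 1) div T = j" "(j * T + 1 + i - 1) mod T = T - 1" by auto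
  then have control: "control ?X (j * T + 1 + i)
      = a ^ T * quant_value (block_index ?X j) (zoom_levels ?X j)"
    unfolding control_def by simp
  have "Suc j * T + 1 = Suc (j * T + 1 + i)" using i by simp
  then have "?X (Suc j * T + 1) = ?X (Suc (j * T + 1 + i))" by (rule arg_cong)
  also have "\<dots> = a * ?X (j * T + 1 + i) + z (j * T + 1 + i) - control ?X (j * T + 1 + i)"
    by (rule closed_loop_Suc) simp
  also have "a * ?X (j * T + 1 + i) + z (j * T + 1 + i)
      = a ^ Suc i * ?X (j * T + 1) + (\<Sum>l<Suc i. a ^ (Suc i - 1 - l) * z (j * T + 1 + l))"
    unfolding closed_loop_within_block[OF i(1)] by (rule unrolled_affine_step)
  finally show ?thesis
    using control unfolding i(2) block_noise_def by (simp add: algebra_simps)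
qed

lemma abs_block_partial_sum_le:
  assumes "i \<le> T"
  shows "\<bar>\<Sum>l<i. a ^ (i - 1 - l) * z (j * T + 1 + l)\<bar> \<le> a ^ T * (\<Sum>l<T. \<bar>z (j * T + 1 + l)\<bar>)"
proof -
  have "\<bar>\<Sum>l<i. a ^ (i - 1 - l) * z (j * T + 1 + l)\<bar> \<le> (\<Sum>l<i. a ^ T * \<bar>z (j * T + 1 + l)\<bar>)"
  proof (rule order_trans[OF sum_abs sum_mono])
    fix l
    have "a ^ (i - 1 - l) \<le> a ^ T" using assms a_ge_1 by (intro power_increasing) auto
    then show "\<bar>a ^ (i - 1 - l) * z (j * T + 1 + l)\<bar> \<le> a ^ T * \<bar>z (j * T + 1 + l)\<bar>"
      using a_ge_1 by (simp add: abs_mult mult_right_mono)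
  qed
  also have "\<dots> \<le> (\<Sum>l<T. a ^ T * \<bar>z (j * T + 1 + l)\<bar>)"
    using assms a_ge_1 by (intro sum_mono2) auto
  finally show ?thesis by (simp add: sum_distrib_left)
qed

lemma block_sum_powr_le:
  assumes "0 < r"
  shows "(\<Sum>l<T. \<bar>z (j * T + 1 + l)\<bar>) powr r \<le> real T powr r * (\<Sum>l<T. \<bar>z (j * T + 1 + l)\<bar> powr r)"
proof -
  have "0 \<in> {..<T}" using T_pos by simp
  then have "{..<T} \<noteq> {}" by blast
  then show ?thesis using sum_powr_le[of "{..<T}" "\<lambda>l. \<bar>z (j * T + 1 + l)\<bar>" r] assms by simp
qed

lemma abs_block_noise_powr_le:
  "\<bar>block_noise z j\<bar> powr \<alpha> \<le> (a ^ T * real T) powr \<alpha> * block_moment z j"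
proof -
  define S where "S = (\<Sum>l<T. \<bar>z (j * T + 1 + l)\<bar>)"
  have "0 \<le> S" unfolding S_def by (simp add: sum_nonneg)
  have "\<bar>block_noise z j\<bar> powr \<alpha> \<le> (a ^ T * S) powr \<alpha>"
    using abs_block_partial_sum_le[of T z j] alpha_pos unfolding block_noise_def S_def
    by (intro powr_mono2) auto
  also have "\<dots> = (a ^ T) powr \<alpha> * S powr \<alpha>"
    using a_ge_1 \<open>0 \<le> S\<close> by (simp add: powr_mult)
  also have "\<dots> \<le> (a ^ T) powr \<alpha> * (real T powr \<alpha> * block_moment z j)"
    unfolding S_def block_moment_def using block_sum_powr_le alpha_pos by (intro mult_left_mono) auto
  also have "\<dots> = (a ^ T * real T) powr \<alpha> * block_moment z j"
    using a_ge_1 by (simp add: powr_mult)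
  finally show ?thesis .
qed

lemma lyap_closed_loop_le:
  "lyap (closed_loop x1 z (j * T + 1)) (zoom_levels (closed_loop x1 z) j) \<le> lyap_bound x1 z j"
proof (induction j)
  case 0
  show ?case
    using closed_loop_1[of x1 z] K_powr_beta_ge_1 by (auto simp: lyap_def)
next
  case (Suc j)
  define X where "X = closed_loop x1 z"
  have "lyap (X (Suc j * T + 1)) (zoom_levels X (Suc j))
      \<le> rate * lyap (X (j * T + 1)) (zoom_levels X j) + gain * (1 + \<bar>block_noise z j\<bar> powr \<alpha>)"
    unfolding X_def closed_loop_next_block block_index_def zoom_levels.simps
    by (rule lyap_step[OF zoom_levels_ge_1])
  also have "\<dots> \<le> rate * lyap_bound x1 z j + gain * (1 + (a ^ T * real T) powr \<alpha> * block_moment z j)"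
    using Suc.IH abs_block_noise_powr_le rate_nonneg gain_ge_1 unfolding X_def
    by (intro add_mono mult_left_mono) auto
  finally show ?case unfolding X_def by simp
qed

lemma abs_closed_loop_le:
  assumes "i < T"
  shows "\<bar>closed_loop x1 z (j * T + 1 + i)\<bar>
    \<le> a ^ T * (\<bar>closed_loop x1 z (j * T + 1)\<bar> + (\<Sum>l<T. \<bar>z (j * T + 1 + l)\<bar>))"
proof -
  have "\<bar>a ^ i * closed_loop x1 z (j * T + 1)\<bar> \<le> a ^ T * \<bar>closed_loop x1 z (j * T + 1)\<bar>"
    using assms a_ge_1 power_increasing[of i T a] by (simp add: abs_mult mult_right_mono)
  then show ?thesis
    using abs_block_partial_sum_le[of i z j] assms
    unfolding closed_loop_within_block[OF assms] distrib_left by linarith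
qed

lemma abs_closed_loop_powr_le:
  assumes "1 \<le> n"
  shows "\<bar>closed_loop x1 z n\<bar> powr \<beta> \<le> (a ^ T) powr \<beta> * 2 powr \<beta>
    * (lyap_bound x1 z ((n - 1) div T) + real T powr \<beta> * (real T + block_moment z ((n - 1) div T)))"
proof -
  define j where "j = (n - 1) div T"
  define i where "i = (n - 1) mod T"
  define Y where "Y = closed_loop x1 z (j * T + 1)"
  define S where "S = (\<Sum>l<T. \<bar>z (j * T + 1 + l)\<bar>)"
  have "0 \<le> S" unfolding S_def by (simp add: sum_nonneg)
  have "i < T" unfolding i_def using T_pos by simp
  have "n = j * T + 1 + i" unfolding j_def i_def using assms div_mult_mod_eq[of "n - 1" T] by linarith
  then have "\<bar>closed_loop x1 z n\<bar> powr \<beta> \<le> (a ^ T * (\<bar>Y\<bar> + S)) powr \<beta>"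
    using abs_closed_loop_le[OF \<open>i < T\<close>] beta_pos unfolding Y_def S_def by (intro powr_mono2) auto
  also have "\<dots> = (a ^ T) powr \<beta> * (\<bar>Y\<bar> + S) powr \<beta>"
    using a_ge_1 \<open>0 \<le> S\<close> by (simp add: powr_mult)
  also have "(\<bar>Y\<bar> + S) powr \<beta> \<le> 2 powr \<beta> * (\<bar>Y\<bar> powr \<beta> + S powr \<beta>)"
    using \<open>0 \<le> S\<close> beta_pos by (intro powr_add_le) auto
  also have "\<bar>Y\<bar> powr \<beta> \<le> lyap_bound x1 z j"
    unfolding Y_def using powr_le_lyap[OF zoom_levels_ge_1] lyap_closed_loop_le by (rule order_trans)
  also have "S powr \<beta> \<le> real T powr \<beta> * (\<Sum>l<T. \<bar>z (j * T + 1 + l)\<bar> powr \<beta>)"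
    unfolding S_def using block_sum_powr_le beta_pos by auto
  also have "(\<Sum>l<T. \<bar>z (j * T + 1 + l)\<bar> powr \<beta>) \<le> (\<Sum>l<T. 1 + \<bar>z (j * T + 1 + l)\<bar> powr \<alpha>)"
    using beta_pos beta_less_alpha by (intro sum_mono powr_le_one_add_powr) auto
  also have "\<dots> = real T + block_moment z j"
    unfolding block_moment_def by (simp add: sum.distrib)
  finally show ?thesis
    unfolding j_def by (simp add: mult_left_mono mult_right_mono add_mono)
qed

lemma zoom_levels_measurable:
  "(\<And>l. l < j \<Longrightarrow> l * T + 1 \<in> I) \<Longrightarrow> (\<lambda>x. zoom_levels x j) \<in> borel_measurable (\<Pi>\<^sub>M i\<in>I. borel)"
proof (induction j)
  case (Suc j)
  then have "(\<lambda>x. zoom_levels x j) \<in> borel_measurable (\<Pi>\<^sub>M i\<in>I. borel)" "j * T + 1 \<in> I" by auto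
  then show ?case unfolding zoom_levels.simps zoom_quant_index by measurable
qed simp

lemma encoder_measurable:
  assumes k: "1 \<le> k"
  shows "encoder k \<in> (\<Pi>\<^sub>M i\<in>{1..k}. borel) \<rightarrow>\<^sub>M count_space {1..Mb}"
proof -
  define j where "j = (k - 1) div T"
  have "(\<lambda>x. zoom_levels x j) \<in> borel_measurable (\<Pi>\<^sub>M i\<in>{1..k}. borel)"
    using block_start_le[OF k] unfolding j_def by (intro zoom_levels_measurable) auto
  moreover have "j * T + 1 \<in> {1..k}"
    using block_start_le[OF k order_refl] unfolding j_def by simp
  ultimately have "encoder k \<in> (\<Pi>\<^sub>M i\<in>{1..k}. borel) \<rightarrow>\<^sub>M count_space UNIV"
    unfolding encoder_def[abs_def] block_index_def j_def[symmetric] by measurable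
  then have "encoder k \<in> (\<Pi>\<^sub>M i\<in>{1..k}. borel) \<rightarrow>\<^sub>M restrict_space (count_space UNIV) {1..Mb}"
    using encoder_range by (intro measurable_restrict_space2) auto
  then show ?thesis by (simp add: restrict_count_space)
qed

lemma quantizer_controller_scheme: "quantizer_controller Mb encoder controller"
  unfolding quantizer_controller_def using encoder_measurable by auto

lemma state_eq_closed_loop: "state a encoder controller X1 Z n \<omega> = closed_loop (X1 \<omega>) (\<lambda>k. Z k \<omega>) n"
  unfolding state_def closed_loop_def ..

lemma block_moment_nonneg: "0 \<le> block_moment z j"
  unfolding block_moment_def by (simp add: sum_nonneg)

lemma lyap_bound_nonneg: "0 \<le> lyap_bound x1 z j"
  using rate_nonneg gain_ge_1 block_moment_nonneg K_powr_beta_ge_1 by (induction j) auto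

lemma block_moment_measurable [measurable]:
  assumes "\<And>k. 1 \<le> k \<Longrightarrow> Z k \<in> borel_measurable M"
  shows "(\<lambda>\<omega>. block_moment (\<lambda>k. Z k \<omega>) j) \<in> borel_measurable M"
proof -
  have [measurable]: "Z (j * T + 1 + l) \<in> borel_measurable M" for l by (rule assms) simp
  show ?thesis unfolding block_moment_def by measurable
qed

lemma lyap_bound_measurable:
  assumes [measurable]: "X1 \<in> borel_measurable M"
    and "\<And>k. 1 \<le> k \<Longrightarrow> Z k \<in> borel_measurable M"
  shows "(\<lambda>\<omega>. lyap_bound (X1 \<omega>) (\<lambda>k. Z k \<omega>) j) \<in> borel_measurable M"
  using block_moment_measurable[OF assms(2)] by (induction j) simp_all

lemma nn_integral_block_moment_le:
  assumes "\<And>k. 1 \<le> k \<Longrightarrow> Z k \<in> borel_measurable M"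
    and "\<And>k. 1 \<le> k \<Longrightarrow> (\<integral>\<^sup>+ \<omega>. ennreal (\<bar>Z k \<omega>\<bar> powr \<alpha>) \<partial>M) \<le> ennreal S" and "0 \<le> S"
  shows "(\<integral>\<^sup>+ \<omega>. ennreal (block_moment (\<lambda>k. Z k \<omega>) j) \<partial>M) \<le> ennreal (real T * S)"
proof -
  have "(\<integral>\<^sup>+ \<omega>. ennreal (block_moment (\<lambda>k. Z k \<omega>) j) \<partial>M)
      = (\<Sum>l<T. \<integral>\<^sup>+ \<omega>. ennreal (\<bar>Z (j * T + 1 + l) \<omega>\<bar> powr \<alpha>) \<partial>M)"
    unfolding block_moment_def using assms(1)
    by (simp add: sum_ennreal[symmetric] nn_integral_sum del: sum_ennreal)
  also have "\<dots> \<le> (\<Sum>l<T. ennreal S)"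
    using assms(2) by (intro sum_mono) simp
  also have "\<dots> = ennreal (real T * S)"
    using assms(3) by (simp add: ennreal_mult ennreal_of_nat_eq_real_of_nat)
  finally show ?thesis .
qed

lemma nn_integral_lyap_bound_Suc_le:
  assumes "prob_space M" and X1: "X1 \<in> borel_measurable M"
    and Z: "\<And>k. 1 \<le> k \<Longrightarrow> Z k \<in> borel_measurable M"
    and Z_moments: "\<And>k. 1 \<le> k \<Longrightarrow> (\<integral>\<^sup>+ \<omega>. ennreal (\<bar>Z k \<omega>\<bar> powr \<alpha>) \<partial>M) \<le> ennreal S"
    and "0 \<le> S"
  shows "(\<integral>\<^sup>+ \<omega>. ennreal (lyap_bound (X1 \<omega>) (\<lambda>k. Z k \<omega>) (Suc j)) \<partial>M)
    \<le> ennreal rate * (\<integral>\<^sup>+ \<omega>. ennreal (lyap_bound (X1 \<omega>) (\<lambda>k. Z k \<omega>) j) \<partial>M)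
      + ennreal (gain + gain * (a ^ T * real T) powr \<alpha> * (real T * S))"
proof -
  interpret prob_space M by fact
  define c where "c = gain * (a ^ T * real T) powr \<alpha>"
  have "0 \<le> c" unfolding c_def using gain_ge_1 by simp
  have "(\<integral>\<^sup>+ \<omega>. ennreal (lyap_bound (X1 \<omega>) (\<lambda>k. Z k \<omega>) (Suc j)) \<partial>M)
      = (\<integral>\<^sup>+ \<omega>. ennreal (gain + rate * lyap_bound (X1 \<omega>) (\<lambda>k. Z k \<omega>) j
          + c * block_moment (\<lambda>k. Z k \<omega>) j) \<partial>M)"
    unfolding c_def by (simp add: algebra_simps)
  also have "\<dots> = ennreal gain + ennreal rate * (\<integral>\<^sup>+ \<omega>. lyap_bound (X1 \<omega>) (\<lambda>k. Z k \<omega>) j \<partial>M)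
      + ennreal c * (\<integral>\<^sup>+ \<omega>. block_moment (\<lambda>k. Z k \<omega>) j \<partial>M)"
    using rate_nonneg gain_ge_1 \<open>0 \<le> c\<close> lyap_bound_nonneg block_moment_nonneg
    by (intro nn_integral_affine lyap_bound_measurable[OF X1 Z] block_moment_measurable[OF Z]) auto
  also have "\<dots> \<le> ennreal gain + ennreal rate * (\<integral>\<^sup>+ \<omega>. lyap_bound (X1 \<omega>) (\<lambda>k. Z k \<omega>) j \<partial>M)
      + ennreal c * ennreal (real T * S)"
    using nn_integral_block_moment_le[OF Z Z_moments \<open>0 \<le> S\<close>]
    by (intro add_mono mult_left_mono) auto
  also have "\<dots> = ennreal rate * (\<integral>\<^sup>+ \<omega>. lyap_bound (X1 \<omega>) (\<lambda>k. Z k \<omega>) j \<partial>M)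
      + ennreal (gain + c * (real T * S))"
    using gain_ge_1 \<open>0 \<le> c\<close> \<open>0 \<le> S\<close> by (simp add: ennreal_plus ennreal_mult add_ac)
  finally show ?thesis unfolding c_def .
qed

lemma nn_integral_lyap_bound_bounded:
  assumes "prob_space M" and X1: "X1 \<in> borel_measurable M"
    and Z: "\<And>k. 1 \<le> k \<Longrightarrow> Z k \<in> borel_measurable M"
    and X1_moment: "(\<integral>\<^sup>+ \<omega>. ennreal (\<bar>X1 \<omega>\<bar> powr \<alpha>) \<partial>M) < \<infinity>"
    and Z_moments: "\<And>k. 1 \<le> k \<Longrightarrow> (\<integral>\<^sup>+ \<omega>. ennreal (\<bar>Z k \<omega>\<bar> powr \<alpha>) \<partial>M) \<le> ennreal S"
    and "0 \<le> S"
  shows "\<exists>B. \<forall>j. (\<integral>\<^sup>+ \<omega>. ennreal (lyap_bound (X1 \<omega>) (\<lambda>k. Z k \<omega>) j) \<partial>M) \<le> ennreal B"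
proof (rule ennreal_affine_recursion_bounded)
  interpret prob_space M by fact
  show "(\<integral>\<^sup>+ \<omega>. ennreal (lyap_bound (X1 \<omega>) (\<lambda>k. Z k \<omega>) (Suc j)) \<partial>M)
      \<le> ennreal rate * (\<integral>\<^sup>+ \<omega>. ennreal (lyap_bound (X1 \<omega>) (\<lambda>k. Z k \<omega>) j) \<partial>M)
        + ennreal (gain + gain * (a ^ T * real T) powr \<alpha> * (real T * S))" for j
    using assms(1) X1 Z Z_moments \<open>0 \<le> S\<close> by (rule nn_integral_lyap_bound_Suc_le)
  have "(\<integral>\<^sup>+ \<omega>. ennreal (lyap_bound (X1 \<omega>) (\<lambda>k. Z k \<omega>) 0) \<partial>M)
      = ennreal 1 + ennreal (2 * K powr \<beta>) * (\<integral>\<^sup>+ \<omega>. \<bar>X1 \<omega>\<bar> powr \<alpha> \<partial>M)"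
    using nn_integral_affine[of "\<lambda>\<omega>. \<bar>X1 \<omega>\<bar> powr \<alpha>" "\<lambda>\<omega>. \<bar>X1 \<omega>\<bar> powr \<alpha>" "2 * K powr \<beta>" 1 0] X1
    by simp
  then show "(\<integral>\<^sup>+ \<omega>. ennreal (lyap_bound (X1 \<omega>) (\<lambda>k. Z k \<omega>) 0) \<partial>M) < \<infinity>"
    using X1_moment by (simp add: ennreal_mult_less_top)
  show "0 \<le> rate" "rate < 1" "0 \<le> gain + gain * (a ^ T * real T) powr \<alpha> * (real T * S)"
    using rate_nonneg rate_less_1 gain_ge_1 \<open>0 \<le> S\<close> by simp_all
qed

lemma nn_integral_state_le:
  assumes "prob_space M" and X1: "X1 \<in> borel_measurable M"
    and Z: "\<And>k. 1 \<le> k \<Longrightarrow> Z k \<in> borel_measurable M" and "1 \<le> n"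
  defines "j \<equiv> (n - 1) div T" and "C \<equiv> (a ^ T) powr \<beta> * 2 powr \<beta>"
  shows "(\<integral>\<^sup>+ \<omega>. ennreal (\<bar>state a encoder controller X1 Z n \<omega>\<bar> powr \<beta>) \<partial>M)
    \<le> ennreal (C * real T powr \<beta> * real T)
      + ennreal C * (\<integral>\<^sup>+ \<omega>. lyap_bound (X1 \<omega>) (\<lambda>k. Z k \<omega>) j \<partial>M)
      + ennreal (C * real T powr \<beta>) * (\<integral>\<^sup>+ \<omega>. block_moment (\<lambda>k. Z k \<omega>) j \<partial>M)"
proof -
  interpret prob_space M by fact
  have "\<bar>state a encoder controller X1 Z n \<omega>\<bar> powr \<beta> \<le> C * real T powr \<beta> * real T
      + C * lyap_bound (X1 \<omega>) (\<lambda>k. Z k \<omega>) j + C * real T powr \<beta> * block_moment (\<lambda>k. Z k \<omega>) j"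
    for \<omega>
    using abs_closed_loop_powr_le[OF \<open>1 \<le> n\<close>, of "X1 \<omega>" "\<lambda>k. Z k \<omega>"]
    unfolding state_eq_closed_loop C_def j_def by (simp add: algebra_simps)
  then have "(\<integral>\<^sup>+ \<omega>. ennreal (\<bar>state a encoder controller X1 Z n \<omega>\<bar> powr \<beta>) \<partial>M)
      \<le> (\<integral>\<^sup>+ \<omega>. ennreal (C * real T powr \<beta> * real T + C * lyap_bound (X1 \<omega>) (\<lambda>k. Z k \<omega>) j
          + C * real T powr \<beta> * block_moment (\<lambda>k. Z k \<omega>) j) \<partial>M)"
    by (intro nn_integral_mono ennreal_leI)
  also have "\<dots> = ennreal (C * real T powr \<beta> * real T)
      + ennreal C * (\<integral>\<^sup>+ \<omega>. lyap_bound (X1 \<omega>) (\<lambda>k. Z k \<omega>) j \<partial>M)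
      + ennreal (C * real T powr \<beta>) * (\<integral>\<^sup>+ \<omega>. block_moment (\<lambda>k. Z k \<omega>) j \<partial>M)"
    unfolding C_def using lyap_bound_nonneg block_moment_nonneg
    by (intro nn_integral_affine lyap_bound_measurable[OF X1 Z] block_moment_measurable[OF Z]) auto
  finally show ?thesis .
qed

theorem moment_stable_scheme:
  assumes "prob_space M" and X1: "X1 \<in> borel_measurable M"
    and Z: "\<And>k. 1 \<le> k \<Longrightarrow> Z k \<in> borel_measurable M"
    and X1_moment: "(\<integral>\<^sup>+ \<omega>. ennreal (\<bar>X1 \<omega>\<bar> powr \<alpha>) \<partial>M) < \<infinity>"
    and Z_moments: "\<And>k. 1 \<le> k \<Longrightarrow> (\<integral>\<^sup>+ \<omega>. ennreal (\<bar>Z k \<omega>\<bar> powr \<alpha>) \<partial>M) \<le> ennreal S"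
    and "0 \<le> S"
  shows "moment_stable M a X1 Z \<beta> encoder controller"
proof -
  obtain B where B: "\<And>j. (\<integral>\<^sup>+ \<omega>. ennreal (lyap_bound (X1 \<omega>) (\<lambda>k. Z k \<omega>) j) \<partial>M) \<le> ennreal B"
    using nn_integral_lyap_bound_bounded[of M X1 Z S] assms by blast
  define C where "C = (a ^ T) powr \<beta> * 2 powr \<beta>"
  define E where "E = ennreal (C * real T powr \<beta> * real T) + ennreal C * ennreal B
    + ennreal (C * real T powr \<beta>) * ennreal (real T * S)"
  have block_moments: "(\<integral>\<^sup>+ \<omega>. ennreal (block_moment (\<lambda>k. Z k \<omega>) j) \<partial>M) \<le> ennreal (real T * S)"
    for j by (rule nn_integral_block_moment_le) (use Z Z_moments \<open>0 \<le> S\<close> in auto)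
  have "(\<integral>\<^sup>+ \<omega>. ennreal (\<bar>state a encoder controller X1 Z n \<omega>\<bar> powr \<beta>) \<partial>M) \<le> E" if "1 \<le> n" for n
  proof -
    have "(\<integral>\<^sup>+ \<omega>. ennreal (\<bar>state a encoder controller X1 Z n \<omega>\<bar> powr \<beta>) \<partial>M)
        \<le> ennreal (C * real T powr \<beta> * real T)
          + ennreal C * (\<integral>\<^sup>+ \<omega>. lyap_bound (X1 \<omega>) (\<lambda>k. Z k \<omega>) ((n - 1) div T) \<partial>M)
          + ennreal (C * real T powr \<beta>) * (\<integral>\<^sup>+ \<omega>. block_moment (\<lambda>k. Z k \<omega>) ((n - 1) div T) \<partial>M)"
      unfolding C_def by (rule nn_integral_state_le) (use assms(1) X1 Z that in auto)
    also have "\<dots> \<le> E"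
      unfolding E_def using B block_moments by (intro add_mono mult_left_mono order_refl) auto
    finally show ?thesis .
  qed
  then have "limsup (\<lambda>n. \<integral>\<^sup>+ \<omega>. ennreal (\<bar>state a encoder controller X1 Z n \<omega>\<bar> powr \<beta>) \<partial>M) \<le> E"
    by (intro Limsup_bounded eventually_sequentiallyI[of 1])
  also have "E < \<infinity>"
    unfolding E_def by (simp add: ennreal_mult_less_top flip: ennreal_mult)
  finally show ?thesis unfolding moment_stable_def .
qed

end

lemma exists_block_length:
  fixes a :: real and Mb :: nat
  assumes "1 \<le> a" "a < real Mb"
  shows "\<exists>T\<ge>1. 4 * a ^ T \<le> real (Mb ^ T) - 1"
proof -
  define r where "r = real Mb / a"
  have "1 < r" using assms unfolding r_def by simp
  then obtain T where T: "5 < r ^ T" using real_arch_pow by blast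
  then have "T \<noteq> 0" by (cases T) auto
  have "1 \<le> a ^ T" using assms by simp
  have "real (Mb ^ T) = r ^ T * a ^ T" using assms unfolding r_def by (simp add: power_divide)
  also have "\<dots> \<ge> 5 * a ^ T" using T \<open>1 \<le> a ^ T\<close> by (intro mult_right_mono) auto
  finally show ?thesis using \<open>T \<noteq> 0\<close> \<open>1 \<le> a ^ T\<close> by (intro exI[of _ T]) auto
qed

lemma exists_zoom_factor:
  fixes c \<alpha> \<beta> :: real
  assumes "\<beta> < \<alpha>"
  shows "\<exists>K\<ge>1. c * K powr (\<beta> - \<alpha>) \<le> 1 / 2"
proof -
  have "((\<lambda>K. c * K powr (\<beta> - \<alpha>)) \<longlongrightarrow> c * 0) at_top"
    using assms by (intro tendsto_mult tendsto_const tendsto_neg_powr filterlim_ident) auto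
  then have "\<forall>\<^sub>F K in at_top. c * K powr (\<beta> - \<alpha>) < 1 / 2"
    by (rule order_tendstoD) simp
  moreover have "\<forall>\<^sub>F K in at_top. (1::real) \<le> K" by (rule eventually_ge_at_top)
  ultimately have "\<forall>\<^sub>F K in at_top. 1 \<le> K \<and> c * K powr (\<beta> - \<alpha>) < 1 / 2"
    by eventually_elim auto
  then show ?thesis
    unfolding eventually_at_top_linorder by (meson less_eq_real_def order_refl)
qed

theorem theorem1:
  fixes M :: "'w measure" and a \<alpha> \<beta> :: real
    and X1 :: "'w \<Rightarrow> real" and Z :: "nat \<Rightarrow> 'w \<Rightarrow> real"
  assumes "prob_space M"
    and "a \<ge> 1" and "\<alpha> > 0"
    and "prob_space.indep_vars M (\<lambda>_. borel) (\<lambda>i. if i = 0 then X1 else Z i) UNIV"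
    and "(\<integral>\<^sup>+ \<omega>. ennreal (\<bar>X1 \<omega>\<bar> powr \<alpha>) \<partial>M) < \<infinity>"
    and "(SUP n\<in>{1..}. \<integral>\<^sup>+ \<omega>. ennreal (\<bar>Z n \<omega>\<bar> powr \<alpha>) \<partial>M) < \<infinity>"
    and "0 < \<beta>" and "\<beta> < \<alpha>"
  shows "Mstar M a X1 Z \<beta> \<le> nat \<lfloor>a\<rfloor> + 1"
proof -
  define Mb where "Mb = nat \<lfloor>a\<rfloor> + 1"
  have "a < real Mb" unfolding Mb_def using assms(2) by linarith
  obtain T where T: "1 \<le> T" "4 * a ^ T \<le> real (Mb ^ T) - 1"
    using exists_block_length[OF assms(2) \<open>a < real Mb\<close>] by blast
  obtain K where K: "1 \<le> K" "2 powr \<alpha> * (a ^ T) powr \<alpha> * K powr (\<beta> - \<alpha>) \<le> 1 / 2"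
    using exists_zoom_factor[OF assms(8)] by blast
  interpret block_scheme a K \<alpha> \<beta> Mb T
    using assms(2,7,8) T K by unfold_locales simp_all
  interpret P: prob_space M by fact
  text \<open>Independence is only needed for measurability: the moment bound holds pathwise.\<close>
  have X1: "X1 \<in> borel_measurable M"
    using P.indep_vars_measurable[OF assms(4), of 0] by simp
  have Z: "Z k \<in> borel_measurable M" if "1 \<le> k" for k
    using P.indep_vars_measurable[OF assms(4), of k] that by simp
  obtain S where "0 \<le> S" and Z_moments: "\<And>k. 1 \<le> k \<Longrightarrow> (\<integral>\<^sup>+ \<omega>. ennreal (\<bar>Z k \<omega>\<bar> powr \<alpha>) \<partial>M) \<le> ennreal S"
    using SUP_less_top_bounded[OF assms(6)] by auto
  have "moment_stable M a X1 Z \<beta> encoder controller"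
    by (rule moment_stable_scheme[of M X1 Z S]) (use assms(1,5) X1 Z Z_moments \<open>0 \<le> S\<close> in auto)
  then have "Mstar M a X1 Z \<beta> \<le> Mb"
    unfolding Mstar_def using quantizer_controller_scheme by (intro Least_le) blast
  then show ?thesis unfolding Mb_def .
qed

end
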